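(* In the setting below, fix a strategy $\pi$, thresholds $0=v_0\le v_1\le\dots\le v_{n_p}=1$ and $\eta\in(0,1)$, and let $K^\pi_k$ and $H^{q,\pi,\epsilon}_{k,i}$ be as defined below. Let $k\in\{0,\dots,N\}$ and $q\in Q$, and assume that for every $k'\in\{k,\dots,N-1\}$ and every cell $q''\in Q$ the sets $H^{q'',\pi,\epsilon}_{k',i}$, $i=1,\dots,n_p$, are pairwise disjoint. Then $$\inf_{x\in q}V^\pi_k(x)\ \ge\ K^\pi_k(q).$$
   Context: Setting (BNN dynamical system). Let $f^w:\mathbb{R}^n\times\mathbb{R}^c\to\mathbb{R}^n$ be a neural network with parameter vector $w\in\mathbb{R}^{n_w}$, measurable in $(w,x,u)$, and let $p_{\mathbf{w}}(w\mid\mathcal{D})$ be a probability density on $\mathbb{R}^{n_w}$. Fix $\sigma>0$. The posterior predictive density is $p(\bar x\mid(x,u),\mathcal{D})=\int_{\mathbb{R}^{n_w}}\mathcal{N}(\bar x\mid f^w(x,u),\sigma^2 I)\,p_{\mathbf{w}}(w\mid\mathcal{D})\,dw$, with $\mathcal{N}(\cdot\mid m,\sigma^2I)$ the Gaussian density on $\mathbb{R}^n$. Let $\mathcal{U}\subseteq\mathbb{R}^c$ be compact; a strategy is a sequence $\pi=(\pi_k)_k$ of measurable maps $\pi_k:\mathbb{R}^n\to\mathcal{U}$. Let $\mathrm{G},\mathrm{S}\subseteq\mathbb{R}^n$ be measurable, disjoint, and $N\in\mathbb{N}$. Value functions: $V^\pi_N(x)=\mathbf{1}_{\mathrm{G}}(x)$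 and for $0\le k<N$, $V^\pi_k(x)=\mathbf{1}_{\mathrm{G}}(x)+\mathbf{1}_{\mathrm{S}}(x)\int_{\mathbb{R}^n}V^\pi_{k+1}(\bar x)\,p(\bar x\mid(x,\pi_k(x)),\mathcal{D})\,d\bar x$, for $x\in\mathbb{R}^n$. Abstraction: $Q=\{q_1,\dots,q_{n_q}\}$ is a partition of $\mathrm{S}\cup\mathrm{G}$ into measurable cells, each cell contained either in $\mathrm{G}$ or in $\mathrm{S}$; $z:\mathrm{S}\cup\mathrm{G}\to Q$ maps a state to the cell containing it. For $q\in Q$, $\mathbf{1}_{\mathrm{G}}(q)=1$ if $q\subseteq\mathrm{G}$ and $0$ otherwise; similarly $\mathbf{1}_{\mathrm{S}}(q)$. For a function $K:Q\to[0,1]$ write $\tilde K(\bar x)=K(z(\bar x))$ if $\bar x\in\mathrm{S}\cup\mathrm{G}$ and $\tilde K(\bar x)=0$ otherwise. Noise truncation: $\eta\in(0,1)$ and $\epsilon=\sqrt{2\sigma^2}\,\mathrm{erf}^{-1}(\eta)$, so that a scalar $\mathcal{N}(0,\sigma^2)$ variable lies in $[-\epsilon,\epsilon]$ with probability $\eta$. Discretised lower bounds: $K^\pi_N(q)=\mathbf{1}_{\mathrm{G}}(q)$ and for $0\le k<N$ $$K^\pi_k(q)=\mathbf{1}_{\mathrm{G}}(q)+\mathbf{1}_{\mathrm{S}}(q)\sum_{i=1}^{n_p}v_{i-1}\,R(q,k,\pi,i),\qquad R(q,k,\pi,i)=\eta^n\int_{H^{q,\pi,\epsilon}_{k,i}}p_{\mathbf{w}}(w\mid\mathcal{D})\,dw,$$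 where the projecting weight set is $$H^{q,\pi,\epsilon}_{k,i}=\big\{w\in\mathbb{R}^{n_w}:\ \forall x\in q,\ \forall\gamma\in[-\epsilon,\epsilon]^n,\ v_{i-1}\le \tilde K^\pi_{k+1}\big(f^w(x,\pi_k(x))+\gamma\big)\le v_i\big\}$$ (assumed measurable). *)

theory Defs
  imports "HOL-Probability.Probability"
begin

definition erf :: "real \<Rightarrow> real" where
  "erf x = 2 / sqrt pi * (LBINT t=0..x. exp (- (t ^ 2)))"

definition erf_inv :: "real \<Rightarrow> real" where
  "erf_inv y = (THE x. erf x = y)"

definition trunc_eps :: "real \<Rightarrow> real \<Rightarrow> real" where
  "trunc_eps \<sigma> \<eta> = sqrt (2 * \<sigma>\<^sup>2) * erf_inv \<eta>"

definition gauss_density :: "real \<Rightarrow> real^'n \<Rightarrow> real^'n \<Rightarrow> real" where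
  "gauss_density \<sigma> m y = (\<Prod>i\<in>UNIV. normal_density (m $ i) \<sigma> (y $ i))"

definition post_pred ::
  "(real^'w \<Rightarrow> real^'n \<Rightarrow> real^'c \<Rightarrow> real^'n) \<Rightarrow> (real^'w \<Rightarrow> real) \<Rightarrow> real
   \<Rightarrow> real^'n \<Rightarrow> real^'c \<Rightarrow> real^'n \<Rightarrow> real" where
  "post_pred f p \<sigma> x u y = (LINT w|lborel. gauss_density \<sigma> (f w x u) y * p w)"

(* Vrec ... N m = V_{N-m} *)
primrec Vrec ::
  "(real^'w \<Rightarrow> real^'n \<Rightarrow> real^'c \<Rightarrow> real^'n) \<Rightarrow> (real^'w \<Rightarrow> real) \<Rightarrow> real
   \<Rightarrow> (nat \<Rightarrow> real^'n \<Rightarrow> real^'c) \<Rightarrow> (real^'n) set \<Rightarrow> (real^'n) set \<Rightarrow> nat \<Rightarrow> nat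
   \<Rightarrow> real^'n \<Rightarrow> real" where
  "Vrec f p \<sigma> \<pi> G S N 0 x = indicator G x"
| "Vrec f p \<sigma> \<pi> G S N (Suc m) x =
     indicator G x + indicator S x *
       (LINT y|lborel. Vrec f p \<sigma> \<pi> G S N m y * post_pred f p \<sigma> x (\<pi> (N - Suc m) x) y)"

definition Vfun ::
  "(real^'w \<Rightarrow> real^'n \<Rightarrow> real^'c \<Rightarrow> real^'n) \<Rightarrow> (real^'w \<Rightarrow> real) \<Rightarrow> real
   \<Rightarrow> (nat \<Rightarrow> real^'n \<Rightarrow> real^'c) \<Rightarrow> (real^'n) set \<Rightarrow> (real^'n) set \<Rightarrow> nat \<Rightarrow> nat
   \<Rightarrow> real^'n \<Rightarrow> real" where
  "Vfun f p \<sigma> \<pi> G S N k x = Vrec f p \<sigma> \<pi> G S N (N - k) x"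

definition cell_ind :: "'a set \<Rightarrow> 'a set \<Rightarrow> real" where
  "cell_ind A q = (if q \<subseteq> A then 1 else 0)"

definition zcell :: "'a set set \<Rightarrow> 'a \<Rightarrow> 'a set" where
  "zcell Q x = (THE q. q \<in> Q \<and> x \<in> q)"

definition Ktilde :: "'a set set \<Rightarrow> 'a set \<Rightarrow> 'a set \<Rightarrow> ('a set \<Rightarrow> real) \<Rightarrow> 'a \<Rightarrow> real" where
  "Ktilde Q S G K y = (if y \<in> S \<union> G then K (zcell Q y) else 0)"

(* projecting weight set H^{q,pi,eps}_{k,i}, where Knext = K^pi_{k+1} *)
definition Hset ::
  "(real^'w \<Rightarrow> real^'n \<Rightarrow> real^'c \<Rightarrow> real^'n) \<Rightarrow> (nat \<Rightarrow> real^'n \<Rightarrow> real^'c)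
   \<Rightarrow> (real^'n) set set \<Rightarrow> (real^'n) set \<Rightarrow> (real^'n) set \<Rightarrow> real \<Rightarrow> (nat \<Rightarrow> real)
   \<Rightarrow> ((real^'n) set \<Rightarrow> real) \<Rightarrow> nat \<Rightarrow> (real^'n) set \<Rightarrow> nat \<Rightarrow> (real^'w) set" where
  "Hset f \<pi> Q S G \<epsilon> v Knext k q i =
     {w. \<forall>x\<in>q. \<forall>\<gamma>::real^'n. (\<forall>j. \<bar>\<gamma> $ j\<bar> \<le> \<epsilon>) \<longrightarrow>
           v (i - 1) \<le> Ktilde Q S G Knext (f w x (\<pi> k x) + \<gamma>)
         \<and> Ktilde Q S G Knext (f w x (\<pi> k x) + \<gamma>) \<le> v i}"

(* Krec ... N m = K^pi_{N-m} *)
primrec Krec ::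
  "(real^'w \<Rightarrow> real^'n \<Rightarrow> real^'c \<Rightarrow> real^'n) \<Rightarrow> (real^'w \<Rightarrow> real) \<Rightarrow> (nat \<Rightarrow> real^'n \<Rightarrow> real^'c)
   \<Rightarrow> (real^'n) set set \<Rightarrow> (real^'n) set \<Rightarrow> (real^'n) set \<Rightarrow> real \<Rightarrow> real \<Rightarrow> (nat \<Rightarrow> real) \<Rightarrow> nat
   \<Rightarrow> nat \<Rightarrow> nat \<Rightarrow> (real^'n) set \<Rightarrow> real" where
  "Krec f p \<pi> Q S G \<epsilon> \<eta> v np N 0 q = cell_ind G q"
| "Krec f p \<pi> Q S G \<epsilon> \<eta> v np N (Suc m) q =
     cell_ind G q + cell_ind S q *
       (\<Sum>i=1..np. v (i - 1) *
          (\<eta> ^ CARD('n) *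
           (LINT w:Hset f \<pi> Q S G \<epsilon> v (Krec f p \<pi> Q S G \<epsilon> \<eta> v np N m) (N - Suc m) q i|lborel. p w)))"

definition Kfun ::
  "(real^'w \<Rightarrow> real^'n \<Rightarrow> real^'c \<Rightarrow> real^'n) \<Rightarrow> (real^'w \<Rightarrow> real) \<Rightarrow> (nat \<Rightarrow> real^'n \<Rightarrow> real^'c)
   \<Rightarrow> (real^'n) set set \<Rightarrow> (real^'n) set \<Rightarrow> (real^'n) set \<Rightarrow> real \<Rightarrow> real \<Rightarrow> (nat \<Rightarrow> real) \<Rightarrow> nat
   \<Rightarrow> nat \<Rightarrow> nat \<Rightarrow> (real^'n) set \<Rightarrow> real" where
  "Kfun f p \<pi> Q S G \<epsilon> \<eta> v np N k q = Krec f p \<pi> Q S G \<epsilon> \<eta> v np N (N - k) q"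

end

(* Backward induction on k.  In a cell q of S, a weight w in H_i sends every point of q, under
   any noise in the box [-eps, eps]^n, into the region where Ktilde K_(k+1) >= v_(i-1); by the
   induction hypothesis V_(k+1) >= v_(i-1) there.  The box has Gaussian mass eta^n, so the noise
   average of V_(k+1) is at least v_(i-1) eta^n for such w.  As the H_i are disjoint, these bounds
   add up under the posterior over w, and Tonelli's theorem identifies the result with the
   integral of V_(k+1) against the posterior predictive density. *)

theory Submission
  imports Defs
begin

lemma nn_integral_lborel_prod_vec:
  fixes g :: "'n::finite \<Rightarrow> real \<Rightarrow> real"
  assumes [measurable]: "\<And>i. g i \<in> borel_measurable borel"
    and nonneg: "\<And>i t. 0 \<le> g i t"
  shows "(\<integral>\<^sup>+y. (\<Prod>i\<in>UNIV. g i (y $ i)) \<partial>(lborel::(real^'n) measure))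
    = (\<Prod>i\<in>UNIV. \<integral>\<^sup>+t. g i t \<partial>lborel)"
proof -
  define h where "h b = g (SOME i. b = axis i (1::real))" for b :: "real^'n"
  have h_axis: "h (axis i 1) = g i" for i
  proof -
    have "(SOME j. axis i (1::real) = axis j 1) = i"
      by (rule some_equality) (auto simp: axis_eq_axis)
    then show ?thesis by (simp add: h_def)
  qed
  have Basis: "(Basis :: (real^'n) set) = (\<lambda>i. axis i 1) ` UNIV"
    by (auto simp: Basis_vec_def)
  have inj: "inj (\<lambda>i::'n. axis i (1::real))"
    by (auto intro!: injI simp: axis_eq_axis)
  have "(\<integral>\<^sup>+y. (\<Prod>i\<in>UNIV. g i (y $ i)) \<partial>(lborel::(real^'n) measure)) =
        (\<integral>\<^sup>+y. (\<Prod>b\<in>Basis. ennreal (h b (y \<bullet> b))) \<partial>lborel)"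
    using nonneg
    by (intro nn_integral_cong)
       (simp add: Basis prod.reindex[OF inj] h_axis inner_axis prod_ennreal)
  also have "\<dots> = (\<Prod>b\<in>Basis. \<integral>\<^sup>+t. h b t \<partial>lborel)"
    by (rule nn_integral_lborel_prod) (auto simp: Basis h_axis nonneg)
  also have "\<dots> = (\<Prod>i\<in>UNIV. \<integral>\<^sup>+t. g i t \<partial>lborel)"
    by (simp add: Basis prod.reindex[OF inj] h_axis)
  finally show ?thesis .
qed

lemma indicator_vec_box: "indicator {y. \<forall>j. y $ j \<in> I j} y = (\<Prod>j\<in>UNIV. indicator (I j) (y $ j) :: real)"
  by (cases "\<forall>j. y $ j \<in> I j") (auto simp: indicator_def prod_zero_iff)

lemma borel_measurable_vec_nth [measurable]: "(\<lambda>x::real^'n. x $ i) \<in> borel_measurable borel"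
  by (intro borel_measurable_continuous_onI continuous_intros)

lemma borel_measurable_uncurry3:
  fixes f :: "'a::second_countable_topology \<Rightarrow> 'b::second_countable_topology
    \<Rightarrow> 'c::second_countable_topology \<Rightarrow> 'd::topological_space"
  assumes "(\<lambda>(w, x, u). f w x u) \<in> borel_measurable borel"
    and "W \<in> borel_measurable M" "X \<in> borel_measurable M" "U \<in> borel_measurable M"
  shows "(\<lambda>z. f (W z) (X z) (U z)) \<in> borel_measurable M"
proof -
  have "(\<lambda>z. (W z, X z, U z)) \<in> measurable M (borel \<Otimes>\<^sub>M (borel \<Otimes>\<^sub>M borel))"
    using assms(2-4) by measurable
  then have "(\<lambda>z. (W z, X z, U z)) \<in> measurable M borel"
    by (simp add: borel_prod)
  from measurable_compose[OF this assms(1)] show ?thesis by simp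
qed

lemma sum_indicator_disjoint_le:
  fixes a :: "'i \<Rightarrow> ennreal"
  assumes "finite I" "disjoint_family_on H I" "\<And>i. i \<in> I \<Longrightarrow> w \<in> H i \<Longrightarrow> a i \<le> b"
  shows "(\<Sum>i\<in>I. a i * indicator (H i) w) \<le> b"
proof (cases "\<exists>j\<in>I. w \<in> H j")
  case True
  then obtain j where j: "j \<in> I" "w \<in> H j" by blast
  have "(\<Sum>i\<in>I. a i * indicator (H i) w) = (\<Sum>i\<in>I. if i = j then a j else 0)"
    using assms(2) j by (intro sum.cong) (auto simp: disjoint_family_on_def split: split_indicator)
  also have "\<dots> = a j" using assms(1) j by simp
  finally show ?thesis using assms(3) j by simp
next
  case False
  then show ?thesis by simp
qed

lemma ennreal_set_integral_eq_nn_integral: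
  assumes [measurable]: "A \<in> sets lborel" "p \<in> borel_measurable lborel"
    and "\<And>w. 0 \<le> p w" and "integrable lborel p"
  shows "ennreal (LINT w:A|lborel. p w) = (\<integral>\<^sup>+w. ennreal (indicator A w * p w) \<partial>lborel)"
proof -
  have "integrable lborel (\<lambda>w. indicator A w * p w)"
    using integrable_mult_indicator[OF assms(1,4)] by simp
  then show ?thesis
    unfolding set_lebesgue_integral_def using assms(3) by (subst nn_integral_eq_integral) auto
qed

lemma le_enn2real_of_ennreal_le:
  assumes "ennreal x \<le> X" "X < top"
  shows "x \<le> enn2real X"
proof (cases "0 \<le> x")
  case True
  then show ?thesis using enn2real_mono[OF assms] by simp
next
  case False
  then show ?thesis using enn2real_nonneg[of X] by linarith
qed

lemma continuous_on_exp_neg_square: "continuous_on A (\<lambda>t::real. exp (- (t ^ 2)))"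
  by (intro continuous_intros)

lemma interval_lebesgue_integral_exp_neg_square:
  "a \<le> b \<Longrightarrow> (LBINT t=ereal a..ereal b. exp (- (t ^ 2))) = integral {a..b} (\<lambda>t. exp (- (t ^ 2)))"
  by (rule interval_integral_eq_integral)
     (auto intro!: borel_integrable_atLeastAtMost' continuous_on_exp_neg_square)

lemma erf_eq_integral:
  "0 \<le> x \<Longrightarrow> erf x = 2 / sqrt pi * integral {0..x} (\<lambda>t. exp (- (t ^ 2)))"
  unfolding erf_def using interval_lebesgue_integral_exp_neg_square[of 0 x]
  by (simp add: zero_ereal_def)

lemma erf_0 [simp]: "erf 0 = 0"
  by (simp add: erf_eq_integral)

lemma erf_nonpos: "x \<le> 0 \<Longrightarrow> erf x \<le> 0"
proof -
  assume x: "x \<le> 0"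
  have "(LBINT t=0..x. exp (- (t ^ 2))) = - integral {x..0} (\<lambda>t. exp (- (t ^ 2)))"
    using interval_integral_endpoints_reverse interval_lebesgue_integral_exp_neg_square[OF x]
    by (metis zero_ereal_def)
  moreover have "integral {x..0} (\<lambda>t. exp (- (t ^ 2))) \<ge> 0"
    by (intro integral_nonneg integrable_continuous_interval continuous_on_exp_neg_square) auto
  ultimately show ?thesis unfolding erf_def by (simp add: mult_nonneg_nonpos)
qed

lemma continuous_on_erf_nonneg: "continuous_on {0..b} erf"
proof -
  have "continuous_on {0..b} (\<lambda>x. 2 / sqrt pi * integral {0..x} (\<lambda>t. exp (- (t ^ 2))))"
    by (intro continuous_intros indefinite_integral_continuous_1 integrable_continuous_interval
        continuous_on_exp_neg_square)
  then show ?thesis by (rule continuous_on_cong[THEN iffD1, rotated 2]) (auto simp: erf_eq_integral)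
qed

lemma erf_strict_mono_nonneg:
  assumes "0 \<le> x" "x < y"
  shows "erf x < erf y"
proof -
  define F :: "real \<Rightarrow> real" where "F z = integral {0..z} (\<lambda>t. exp (- (t ^ 2)))" for z
  have deriv: "\<exists>d. (F has_real_derivative d) (at z) \<and> 0 < d" if "x < z" "z < y" for z
  proof -
    have "(F has_real_derivative exp (- (z ^ 2))) (at z within {0..y})"
      unfolding F_def using assms that
      by (intro integral_has_real_derivative continuous_on_exp_neg_square) auto
    moreover have "at z within {0..y} = at z"
      using assms that by (intro at_within_interior) auto
    ultimately show ?thesis by auto
  qed
  have "continuous_on {0..y} F"
    unfolding F_def
    by (intro indefinite_integral_continuous_1 integrable_continuous_interval
        continuous_on_exp_neg_square)
  then have cont: "continuous_on {x..y} F"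
    by (rule continuous_on_subset) (use assms in auto)
  have "F x < F y"
    using DERIV_pos_imp_increasing_open[OF assms(2) deriv cont] by simp
  then show ?thesis using assms by (simp add: erf_eq_integral F_def divide_strict_right_mono)
qed

lemma erf_tendsto_1: "(erf \<longlongrightarrow> 1) at_top"
proof -
  let ?g = "\<lambda>t::real. exp (- (t ^ 2))"
  have hb: "has_bochner_integral lborel (\<lambda>x. indicator {0..} x *\<^sub>R exp (- x\<^sup>2)) (sqrt pi / 2)"
    by (rule gaussian_moment_0)
  have si: "set_integrable lborel {0::real..} ?g"
    using integrable.intros[OF hb] unfolding set_integrable_def by simp
  have val: "set_lebesgue_integral lborel {0::real..} ?g = sqrt pi / 2"
    using has_bochner_integral_integral_eq[OF hb] unfolding set_lebesgue_integral_def by simp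
  have "((\<lambda>b. set_lebesgue_integral lborel {0..b} ?g) \<longlongrightarrow> sqrt pi / 2) at_top"
    using tendsto_set_lebesgue_integral_at_top[OF _ si] val by simp
  then have "((\<lambda>b. 2 / sqrt pi * set_lebesgue_integral lborel {0..b} ?g) \<longlongrightarrow> 2 / sqrt pi * (sqrt pi / 2)) at_top"
    by (rule tendsto_mult_left)
  moreover have "\<forall>\<^sub>F b in at_top. 2 / sqrt pi * set_lebesgue_integral lborel {0..b} ?g = erf b"
    using eventually_ge_at_top[of "0::real"]
    by eventually_elim
      (auto simp: erf_eq_integral intro!: set_borel_integral_eq_integral
        borel_integrable_atLeastAtMost' continuous_on_exp_neg_square)
  ultimately show ?thesis by (simp add: tendsto_cong)
qed

lemma erf_inv:
  assumes "0 < \<eta>" "\<eta> < 1"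
  shows "0 < erf_inv \<eta>" "erf (erf_inv \<eta>) = \<eta>"
proof -
  have "\<forall>\<^sub>F b in at_top. \<eta> < erf b \<and> 0 \<le> b"
    using order_tendstoD(1)[OF erf_tendsto_1 assms(2)] eventually_ge_at_top[of 0]
    by (rule eventually_conj)
  then obtain b where b: "\<eta> < erf b" "0 \<le> b"
    using eventually_happens'[OF trivial_limit_at_top_linorder] by blast
  obtain a where a: "0 \<le> a" "erf a = \<eta>"
    using IVT'[of erf 0 \<eta> b] b assms continuous_on_erf_nonneg[of b] by auto
  have unique: "x = a" if x: "erf x = \<eta>" for x
  proof -
    have "0 < x" using erf_nonpos[of x] x assms by linarith
    then show ?thesis
      using erf_strict_mono_nonneg[of x a] erf_strict_mono_nonneg[of a x] a x
      by (cases x a rule: linorder_cases) auto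
  qed
  have "erf_inv \<eta> = a"
    unfolding erf_inv_def using a(2) unique by (rule the_equality)
  moreover have "a \<noteq> 0" using a assms by auto
  ultimately show "0 < erf_inv \<eta>" "erf (erf_inv \<eta>) = \<eta>" using a by auto
qed

lemma nn_integral_erf_density:
  assumes "0 \<le> a"
  shows "(\<integral>\<^sup>+s. ennreal (indicator {-a..a} s * (exp (- s\<^sup>2) / sqrt pi)) \<partial>lborel) = ennreal (erf a)"
proof -
  define h where "h s = exp (- s\<^sup>2) / sqrt pi" for s :: real
  have h_cont: "continuous_on A h" for A unfolding h_def by (intro continuous_intros) auto
  have "integral {-a..a} h = integral {-a..0} h + integral {0..a} h"
    using assms Henstock_Kurzweil_Integration.integral_combine[where a="-a" and c=0 and b=a and f=h,
        OF _ _ integrable_continuous_interval[OF h_cont]]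
    by simp
  also have "integral {-a..0} h = integral {0..a} h"
  proof -
    have "(\<lambda>s. h (- s)) = h" by (simp add: h_def fun_eq_iff)
    then show ?thesis using Henstock_Kurzweil_Integration.integral_reflect_real[of a 0 h] by simp
  qed
  also have "integral {0..a} h + integral {0..a} h = erf a"
    using assms erf_eq_integral[of a] unfolding h_def[abs_def] by (simp add: integral_divide)
  finally have "(h has_integral erf a) {-a..a}"
    using integrable_integral[OF integrable_continuous_interval[OF h_cont, of "-a" a]] by simp
  moreover have "(\<lambda>s. indicator {-a..a} s * h s) = (\<lambda>s. if s \<in> {-a..a} then h s else 0)"
    by (auto simp: indicator_def)
  ultimately have "((\<lambda>s. indicator {-a..a} s * h s) has_integral erf a) UNIV"
    by (simp only: has_integral_restrict_UNIV)
  moreover have "(\<lambda>s. indicator {-a..a} s * h s) \<in> borel_measurable borel"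
    unfolding h_def by measurable
  moreover have "0 \<le> indicator {-a..a} s * h s" for s
    by (simp add: h_def)
  ultimately show ?thesis
    unfolding h_def by (intro nn_integral_has_integral_lborel)
qed

lemma nn_integral_normal_density_trunc_eps:
  assumes "0 < \<sigma>" "0 < \<eta>" "\<eta> < 1"
  shows "(\<integral>\<^sup>+t. ennreal (indicator {\<mu> - trunc_eps \<sigma> \<eta> .. \<mu> + trunc_eps \<sigma> \<eta>} t
      * normal_density \<mu> \<sigma> t) \<partial>lborel) = ennreal \<eta>"
proof -
  define a where "a = erf_inv \<eta>"
  define c where "c = sqrt (2 * \<sigma>\<^sup>2)"
  have a: "0 < a" "erf a = \<eta>" using erf_inv[OF assms(2,3)] by (auto simp: a_def)
  have c: "0 < c" using assms by (simp add: c_def)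
  have eps: "trunc_eps \<sigma> \<eta> = c * a" by (simp add: trunc_eps_def c_def a_def)
  have affine_change: "c * (indicator {\<mu> - c * a .. \<mu> + c * a} (\<mu> + c * s) * normal_density \<mu> \<sigma> (\<mu> + c * s))
      = indicator {-a..a} s * (exp (- s\<^sup>2) / sqrt pi)" for s
  proof -
    have "\<mu> + c * s \<in> {\<mu> - c * a .. \<mu> + c * a} \<longleftrightarrow> c * -a \<le> c * s \<and> c * s \<le> c * a"
      by simp
    also have "\<dots> \<longleftrightarrow> s \<in> {-a..a}"
      unfolding mult_le_cancel_left_pos[OF c] by simp
    finally have ind: "indicator {\<mu> - c * a .. \<mu> + c * a} (\<mu> + c * s) = (indicator {-a..a} s :: real)"
      by (simp add: indicator_def)
    have "(c * s)\<^sup>2 = 2 * \<sigma>\<^sup>2 * s\<^sup>2"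
      by (simp add: c_def power_mult_distrib)
    then have expo: "- (\<mu> + c * s - \<mu>)\<^sup>2 / (2 * \<sigma>\<^sup>2) = - s\<^sup>2"
      using assms(1) by simp
    have sq: "sqrt (2 * pi * \<sigma>\<^sup>2) = sqrt pi * c"
      by (simp add: c_def real_sqrt_mult[symmetric] ac_simps)
    have "c * normal_density \<mu> \<sigma> (\<mu> + c * s) = c / (sqrt pi * c) * exp (- s\<^sup>2)"
      unfolding normal_density_def sq expo by simp
    also have "\<dots> = exp (- s\<^sup>2) / sqrt pi"
      using c by simp
    finally show ?thesis unfolding ind by (metis mult.left_commute)
  qed
  have "(\<integral>\<^sup>+t. ennreal (indicator {\<mu> - c * a .. \<mu> + c * a} t * normal_density \<mu> \<sigma> t) \<partial>lborel)
      = ennreal \<bar>c\<bar> * (\<integral>\<^sup>+s. ennreal (indicator {\<mu> - c * a .. \<mu> + c * a} (\<mu> + c * s)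
          * normal_density \<mu> \<sigma> (\<mu> + c * s)) \<partial>lborel)"
    by (rule nn_integral_real_affine) (use c in auto)
  also have "\<dots> = (\<integral>\<^sup>+s. ennreal (indicator {-a..a} s * (exp (- s\<^sup>2) / sqrt pi)) \<partial>lborel)"
    using c by (simp add: nn_integral_cmult[symmetric] ennreal_mult[symmetric] affine_change)
  also have "\<dots> = ennreal \<eta>"
    using nn_integral_erf_density[of a] a by simp
  finally show ?thesis by (simp add: eps)
qed

lemma borel_measurable_gauss_density [measurable]:
  assumes [measurable]: "m \<in> borel_measurable M" "y \<in> borel_measurable M"
  shows "(\<lambda>z. gauss_density \<sigma> (m z) (y z)) \<in> borel_measurable M"
  unfolding gauss_density_def normal_density_def by measurable

lemma gauss_density_nonneg: "0 \<le> gauss_density \<sigma> m y"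
  unfolding gauss_density_def by (intro prod_nonneg) auto

lemma gauss_density_le: "gauss_density \<sigma> (m::real^'n) y \<le> (1 / sqrt (2 * pi * \<sigma>\<^sup>2)) ^ CARD('n)"
proof -
  have "normal_density \<mu> \<sigma> t \<le> 1 / sqrt (2 * pi * \<sigma>\<^sup>2)" for \<mu> t
    unfolding normal_density_def by (intro mult_left_le) auto
  then have "gauss_density \<sigma> m y \<le> (\<Prod>i\<in>(UNIV::'n set). 1 / sqrt (2 * pi * \<sigma>\<^sup>2))"
    unfolding gauss_density_def by (intro prod_mono) auto
  then show ?thesis by simp
qed

lemma nn_integral_gauss_density:
  assumes "0 < \<sigma>"
  shows "(\<integral>\<^sup>+y. gauss_density \<sigma> (m::real^'n) y \<partial>lborel) = 1"
proof -
  have "(\<integral>\<^sup>+t. normal_density \<mu> \<sigma> t \<partial>lborel) = 1" for \<mu>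
    using assms
    by (subst nn_integral_eq_integral)
       (auto simp: integrable_normal_density[OF assms] integral_normal_density[OF assms])
  then show ?thesis
    unfolding gauss_density_def by (subst nn_integral_lborel_prod_vec) auto
qed

lemma nn_integral_gauss_density_box:
  assumes "0 < \<sigma>" "0 < \<eta>" "\<eta> < 1"
  shows "(\<integral>\<^sup>+y. ennreal (indicator {y. \<forall>j. \<bar>y $ j - m $ j\<bar> \<le> trunc_eps \<sigma> \<eta>} y
      * gauss_density \<sigma> (m::real^'n) y) \<partial>lborel) = ennreal (\<eta> ^ CARD('n))"
proof -
  define e where "e = trunc_eps \<sigma> \<eta>"
  have "indicator {y. \<forall>j. \<bar>y $ j - m $ j\<bar> \<le> e} y * gauss_density \<sigma> m y
      = (\<Prod>i\<in>UNIV. indicator {m $ i - e .. m $ i + e} (y $ i) * normal_density (m $ i) \<sigma> (y $ i))"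
    for y
  proof -
    have "\<bar>z - m $ j\<bar> \<le> e \<longleftrightarrow> z \<in> {m $ j - e .. m $ j + e}" for z j
      by (auto simp: abs_le_iff)
    then have "{y. \<forall>j. \<bar>y $ j - m $ j\<bar> \<le> e} = {y. \<forall>j. y $ j \<in> {m $ j - e .. m $ j + e}}"
      by presburger
    then have "indicator {y. \<forall>j. \<bar>y $ j - m $ j\<bar> \<le> e} y = (\<Prod>i\<in>UNIV. indicator {m $ i - e .. m $ i + e} (y $ i) :: real)"
      by (simp only: indicator_vec_box)
    then show ?thesis
      by (simp add: gauss_density_def prod.distrib)
  qed
  then have "(\<integral>\<^sup>+y. ennreal (indicator {y. \<forall>j. \<bar>y $ j - m $ j\<bar> \<le> e} y * gauss_density \<sigma> m y) \<partial>lborel)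
      = (\<integral>\<^sup>+y. ennreal (\<Prod>i\<in>UNIV. indicator {m $ i - e .. m $ i + e} (y $ i)
          * normal_density (m $ i) \<sigma> (y $ i)) \<partial>lborel)"
    by simp
  also have "\<dots> = (\<Prod>i\<in>UNIV. \<integral>\<^sup>+t. ennreal (indicator {m $ i - e .. m $ i + e} t
      * normal_density (m $ i) \<sigma> t) \<partial>lborel)"
    by (rule nn_integral_lborel_prod_vec) auto
  also have "\<dots> = ennreal \<eta> ^ CARD('n)"
    unfolding e_def using nn_integral_normal_density_trunc_eps[OF assms] by simp
  finally show ?thesis
    unfolding e_def using assms by (simp add: ennreal_power)
qed

lemma nn_integral_gauss_density_ge:
  fixes m :: "real^'n"
  assumes "0 < \<sigma>" "0 < \<eta>" "\<eta> < 1"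
    and V_nonneg: "\<And>y. 0 \<le> V y" and "0 \<le> c"
    and V_ge: "\<And>y. (\<forall>j. \<bar>y $ j - m $ j\<bar> \<le> trunc_eps \<sigma> \<eta>) \<Longrightarrow> c \<le> V y"
  shows "ennreal (c * \<eta> ^ CARD('n)) \<le> (\<integral>\<^sup>+y. ennreal (V y * gauss_density \<sigma> m y) \<partial>lborel)"
proof -
  define B where "B = {y::real^'n. \<forall>j. \<bar>y $ j - m $ j\<bar> \<le> trunc_eps \<sigma> \<eta>}"
  have "closed B"
    unfolding B_def by (intro closed_Collect_all closed_Collect_le continuous_intros)
  then have [measurable]: "B \<in> sets borel" by simp
  have "ennreal (c * \<eta> ^ CARD('n))
      = ennreal c * (\<integral>\<^sup>+y. ennreal (indicator B y * gauss_density \<sigma> m y) \<partial>lborel)"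
    unfolding B_def using nn_integral_gauss_density_box[OF assms(1-3), of m] assms
    by (simp add: ennreal_mult)
  also have "\<dots> = (\<integral>\<^sup>+y. ennreal (c * (indicator B y * gauss_density \<sigma> m y)) \<partial>lborel)"
    using \<open>0 \<le> c\<close>
    by (subst nn_integral_cmult[symmetric]) (auto simp: ennreal_mult gauss_density_nonneg)
  also have "\<dots> \<le> (\<integral>\<^sup>+y. ennreal (V y * gauss_density \<sigma> m y) \<partial>lborel)"
  proof (intro nn_integral_mono ennreal_leI)
    fix y
    show "c * (indicator B y * gauss_density \<sigma> m y) \<le> V y * gauss_density \<sigma> m y"
      using V_ge[of y] V_nonneg[of y] gauss_density_nonneg[of \<sigma> m y]
      by (cases "y \<in> B") (auto simp: B_def intro: mult_right_mono)
  qed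
  finally show ?thesis .
qed

lemma borel_measurable_post_pred:
  fixes f :: "real^'w \<Rightarrow> real^'n \<Rightarrow> real^'c \<Rightarrow> real^'n"
  assumes f: "(\<lambda>(w, x, u). f w x u) \<in> borel_measurable borel"
    and [measurable]: "p \<in> borel_measurable lborel" "\<pi> \<in> borel_measurable borel"
  shows "(\<lambda>(x, y). post_pred f p \<sigma> x (\<pi> x) y) \<in> borel_measurable (lborel \<Otimes>\<^sub>M lborel)"
proof -
  have [measurable]: "(\<lambda>z::(((real^'n) \<times> (real^'n)) \<times> (real^'w)). f (snd z) (fst (fst z)) (\<pi> (fst (fst z))))
      \<in> borel_measurable ((lborel \<Otimes>\<^sub>M lborel) \<Otimes>\<^sub>M lborel)"
    by (rule borel_measurable_uncurry3[OF f]) measurable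
  have "(\<lambda>xy. LINT w|lborel. gauss_density \<sigma> (f w (fst xy) (\<pi> (fst xy))) (snd xy) * p w)
      \<in> borel_measurable (lborel \<Otimes>\<^sub>M lborel)"
    by (intro lborel.borel_measurable_lebesgue_integral) measurable
  then show ?thesis unfolding post_pred_def by (simp add: split_beta')
qed

lemma borel_measurable_post_pred_right:
  fixes f :: "real^'w \<Rightarrow> real^'n \<Rightarrow> real^'c \<Rightarrow> real^'n"
  assumes "(\<lambda>(w, x, u). f w x u) \<in> borel_measurable borel" "p \<in> borel_measurable lborel"
  shows "post_pred f p \<sigma> x u \<in> borel_measurable lborel"
  using measurable_Pair2[OF borel_measurable_post_pred[OF assms, of "\<lambda>_. u"], of x] by simp

lemma
  fixes f :: "real^'w \<Rightarrow> real^'n \<Rightarrow> real^'c \<Rightarrow> real^'n"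
  assumes f: "(\<lambda>(w, x, u). f w x u) \<in> borel_measurable borel"
    and [measurable]: "p \<in> borel_measurable lborel"
    and p_nonneg: "\<And>w. 0 \<le> p w" and p_prob: "(\<integral>\<^sup>+w. ennreal (p w) \<partial>lborel) = 1"
  shows post_pred_nonneg: "0 \<le> post_pred f p \<sigma> x u y"
    and ennreal_post_pred: "ennreal (post_pred f p \<sigma> x u y)
      = (\<integral>\<^sup>+w. ennreal (gauss_density \<sigma> (f w x u) y * p w) \<partial>lborel)"
proof -
  define C where "C = (1 / sqrt (2 * pi * \<sigma>\<^sup>2)) ^ CARD('n)"
  have [measurable]: "(\<lambda>w. f w x u) \<in> borel_measurable lborel"
    by (rule borel_measurable_uncurry3[OF f]) auto
  have "integrable lborel (\<lambda>w. gauss_density \<sigma> (f w x u) y * p w)"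
  proof (rule Bochner_Integration.integrable_bound)
    show "integrable lborel (\<lambda>w. C * p w)"
      using p_nonneg p_prob by (intro integrable_mult_right integrableI_nonneg) auto
    show "AE w in lborel. norm (gauss_density \<sigma> (f w x u) y * p w) \<le> norm (C * p w)"
    proof (intro AE_I2)
      fix w
      have "\<bar>gauss_density \<sigma> (f w x u) y\<bar> \<le> C"
        using gauss_density_le[of \<sigma> "f w x u" y] gauss_density_nonneg[of \<sigma> "f w x u" y]
        by (simp add: C_def)
      then show "norm (gauss_density \<sigma> (f w x u) y * p w) \<le> norm (C * p w)"
        using p_nonneg[of w] by (simp add: abs_mult mult_right_mono)
    qed
  qed measurable
  then show "ennreal (post_pred f p \<sigma> x u y)
      = (\<integral>\<^sup>+w. ennreal (gauss_density \<sigma> (f w x u) y * p w) \<partial>lborel)"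
    unfolding post_pred_def
    by (intro nn_integral_eq_integral[symmetric])
       (auto simp: gauss_density_nonneg p_nonneg)
  show "0 \<le> post_pred f p \<sigma> x u y"
    unfolding post_pred_def by (intro integral_nonneg_AE) (auto simp: gauss_density_nonneg p_nonneg)
qed

lemma nn_integral_post_pred:
  fixes f :: "real^'w \<Rightarrow> real^'n \<Rightarrow> real^'c \<Rightarrow> real^'n"
  assumes f: "(\<lambda>(w, x, u). f w x u) \<in> borel_measurable borel"
    and p_meas [measurable]: "p \<in> borel_measurable lborel"
    and p_nonneg: "\<And>w. 0 \<le> p w" and p_prob: "(\<integral>\<^sup>+w. ennreal (p w) \<partial>lborel) = 1"
    and [measurable]: "V \<in> borel_measurable borel" and V_nonneg: "\<And>y. 0 \<le> V y"
  shows "(\<integral>\<^sup>+y. ennreal (V y * post_pred f p \<sigma> x u y) \<partial>lborel)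
    = (\<integral>\<^sup>+w. ennreal (p w) * (\<integral>\<^sup>+y. ennreal (V y * gauss_density \<sigma> (f w x u) y) \<partial>lborel) \<partial>lborel)"
proof -
  let ?g = "\<lambda>w y. gauss_density \<sigma> (f w x u) y"
  have [measurable]: "(\<lambda>z::(real^'n) \<times> (real^'w). f (snd z) x u) \<in> borel_measurable (lborel \<Otimes>\<^sub>M lborel)"
    by (rule borel_measurable_uncurry3[OF f]) auto
  have [measurable]: "(\<lambda>w. f w x u) \<in> borel_measurable lborel"
    by (rule borel_measurable_uncurry3[OF f]) auto
  have "(\<integral>\<^sup>+y. ennreal (V y * post_pred f p \<sigma> x u y) \<partial>lborel)
      = (\<integral>\<^sup>+y. ennreal (V y) * (\<integral>\<^sup>+w. ennreal (?g w y * p w) \<partial>lborel) \<partial>lborel)"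
    using V_nonneg post_pred_nonneg[OF f p_meas p_nonneg p_prob]
    by (simp add: ennreal_mult ennreal_post_pred[OF f p_meas p_nonneg p_prob])
  also have "\<dots> = (\<integral>\<^sup>+y. (\<integral>\<^sup>+w. ennreal (V y * ?g w y * p w) \<partial>lborel) \<partial>lborel)"
  proof (intro nn_integral_cong)
    fix y
    have "ennreal (V y) * ennreal (?g w y * p w) = ennreal (V y * ?g w y * p w)" for w
      using V_nonneg[of y] gauss_density_nonneg[of \<sigma> "f w x u" y] p_nonneg[of w]
      by (simp add: ennreal_mult[symmetric] mult.assoc)
    then show "ennreal (V y) * (\<integral>\<^sup>+w. ennreal (?g w y * p w) \<partial>lborel)
        = (\<integral>\<^sup>+w. ennreal (V y * ?g w y * p w) \<partial>lborel)"
      by (simp add: nn_integral_cmult[symmetric])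
  qed
  also have "\<dots> = (\<integral>\<^sup>+w. (\<integral>\<^sup>+y. ennreal (V y * ?g w y * p w) \<partial>lborel) \<partial>lborel)"
    by (rule lborel_pair.Fubini') measurable
  also have "\<dots> = (\<integral>\<^sup>+w. ennreal (p w) * (\<integral>\<^sup>+y. ennreal (V y * ?g w y) \<partial>lborel) \<partial>lborel)"
  proof (intro nn_integral_cong)
    fix w
    have "ennreal (V y * ?g w y * p w) = ennreal (p w) * ennreal (V y * ?g w y)" for y
      using V_nonneg[of y] gauss_density_nonneg[of \<sigma> "f w x u" y] p_nonneg[of w]
      by (simp add: ennreal_mult[symmetric] mult_ac)
    then show "(\<integral>\<^sup>+y. ennreal (V y * ?g w y * p w) \<partial>lborel)
        = ennreal (p w) * (\<integral>\<^sup>+y. ennreal (V y * ?g w y) \<partial>lborel)"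
      by (simp add: nn_integral_cmult)
  qed
  finally show ?thesis .
qed

lemma nn_integral_gauss_mixture_le_1:
  assumes "0 < \<sigma>" and p_prob: "(\<integral>\<^sup>+w. ennreal (p w) \<partial>lborel) = 1"
    and V_nonneg: "\<And>y. 0 \<le> V y" and V_le_1: "\<And>y. V y \<le> 1"
  shows "(\<integral>\<^sup>+w. ennreal (p w) * (\<integral>\<^sup>+y. ennreal (V y * gauss_density \<sigma> (F w) y) \<partial>lborel) \<partial>lborel) \<le> 1"
proof -
  have "(\<integral>\<^sup>+y. ennreal (V y * gauss_density \<sigma> (F w) y) \<partial>lborel) \<le> 1" for w
  proof -
    have "(\<integral>\<^sup>+y. ennreal (V y * gauss_density \<sigma> (F w) y) \<partial>lborel)
        \<le> (\<integral>\<^sup>+y. ennreal (gauss_density \<sigma> (F w) y) \<partial>lborel)"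
      using V_le_1 V_nonneg gauss_density_nonneg
      by (intro nn_integral_mono ennreal_leI mult_left_le_one_le)
    also have "\<dots> = 1" by (rule nn_integral_gauss_density[OF assms(1)])
    finally show ?thesis .
  qed
  then have "(\<integral>\<^sup>+w. ennreal (p w) * (\<integral>\<^sup>+y. ennreal (V y * gauss_density \<sigma> (F w) y) \<partial>lborel) \<partial>lborel)
      \<le> (\<integral>\<^sup>+w. ennreal (p w) \<partial>lborel)"
    by (intro nn_integral_mono) (auto intro: mult_left_le)
  then show ?thesis using p_prob by simp
qed

lemma
  fixes f :: "real^'w \<Rightarrow> real^'n \<Rightarrow> real^'c \<Rightarrow> real^'n"
  assumes f: "(\<lambda>(w, x, u). f w x u) \<in> borel_measurable borel"
    and p_meas: "p \<in> borel_measurable lborel"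
    and p_nonneg: "\<And>w. 0 \<le> p w" and p_prob: "(\<integral>\<^sup>+w. ennreal (p w) \<partial>lborel) = 1"
    and "0 < \<sigma>"
    and V_meas [measurable]: "V \<in> borel_measurable borel"
    and V_nonneg: "\<And>y. 0 \<le> V y" and V_le_1: "\<And>y. V y \<le> 1"
  shows nn_integral_post_pred_le_1: "(\<integral>\<^sup>+y. ennreal (V y * post_pred f p \<sigma> x u y) \<partial>lborel) \<le> 1"
    and integral_post_pred_eq_enn2real: "(LINT y|lborel. V y * post_pred f p \<sigma> x u y)
      = enn2real (\<integral>\<^sup>+y. ennreal (V y * post_pred f p \<sigma> x u y) \<partial>lborel)"
proof -
  show "(\<integral>\<^sup>+y. ennreal (V y * post_pred f p \<sigma> x u y) \<partial>lborel) \<le> 1"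
    unfolding nn_integral_post_pred[OF f p_meas p_nonneg p_prob V_meas V_nonneg]
    by (rule nn_integral_gauss_mixture_le_1[OF \<open>0 < \<sigma>\<close> p_prob V_nonneg V_le_1])
  have [measurable]: "post_pred f p \<sigma> x u \<in> borel_measurable lborel"
    by (rule borel_measurable_post_pred_right[OF f p_meas])
  show "(LINT y|lborel. V y * post_pred f p \<sigma> x u y)
      = enn2real (\<integral>\<^sup>+y. ennreal (V y * post_pred f p \<sigma> x u y) \<partial>lborel)"
    using V_nonneg post_pred_nonneg[OF f p_meas p_nonneg p_prob]
    by (intro integral_eq_nn_integral) auto
qed

lemma threshold_sum_le_nn_integral_gauss_mixture:
  fixes F :: "real^'w \<Rightarrow> real^'n" and H :: "'i \<Rightarrow> (real^'w) set"
  assumes "0 < \<sigma>" "0 < \<eta>" "\<eta> < 1"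
    and p_meas [measurable]: "p \<in> borel_measurable lborel"
    and p_nonneg: "\<And>w. 0 \<le> p w" and p_prob: "(\<integral>\<^sup>+w. ennreal (p w) \<partial>lborel) = 1"
    and V_nonneg: "\<And>y. 0 \<le> V y"
    and "finite I" and H_meas: "\<And>i. i \<in> I \<Longrightarrow> H i \<in> sets lborel"
    and H_disj: "disjoint_family_on H I"
    and c_nonneg: "\<And>i. i \<in> I \<Longrightarrow> 0 \<le> c i"
    and V_ge: "\<And>i w y. i \<in> I \<Longrightarrow> w \<in> H i \<Longrightarrow>
      (\<forall>j. \<bar>y $ j - F w $ j\<bar> \<le> trunc_eps \<sigma> \<eta>) \<Longrightarrow> c i \<le> V y"
  shows "ennreal (\<Sum>i\<in>I. c i * (\<eta> ^ CARD('n) * (LINT w:H i|lborel. p w)))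
    \<le> (\<integral>\<^sup>+w. ennreal (p w) * (\<integral>\<^sup>+y. ennreal (V y * gauss_density \<sigma> (F w) y) \<partial>lborel) \<partial>lborel)"
proof -
  define k where "k i = ennreal (c i * \<eta> ^ CARD('n))" for i
  have p_int: "integrable lborel p"
    using p_nonneg p_prob by (intro integrableI_nonneg) auto
  have mass_nonneg: "0 \<le> (LINT w:H i|lborel. p w)" for i
    unfolding set_lebesgue_integral_def using p_nonneg
    by (intro integral_nonneg_AE) (auto simp: indicator_def)
  have "ennreal (\<Sum>i\<in>I. c i * (\<eta> ^ CARD('n) * (LINT w:H i|lborel. p w)))
      = (\<Sum>i\<in>I. k i * ennreal (LINT w:H i|lborel. p w))"
    using c_nonneg mass_nonneg assms(2)
    by (subst sum_ennreal[symmetric]) (auto simp: k_def ennreal_mult mult.assoc)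
  also have "\<dots> = (\<Sum>i\<in>I. \<integral>\<^sup>+w. k i * ennreal (indicator (H i) w * p w) \<partial>lborel)"
  proof (intro sum.cong refl)
    fix i assume i: "i \<in> I"
    note [measurable] = H_meas[OF i]
    show "k i * ennreal (LINT w:H i|lborel. p w) = (\<integral>\<^sup>+w. k i * ennreal (indicator (H i) w * p w) \<partial>lborel)"
      by (simp add: ennreal_set_integral_eq_nn_integral[OF H_meas[OF i] p_meas p_nonneg p_int] nn_integral_cmult)
  qed
  also have "\<dots> = (\<integral>\<^sup>+w. (\<Sum>i\<in>I. k i * ennreal (indicator (H i) w * p w)) \<partial>lborel)"
    using H_meas by (intro nn_integral_sum[symmetric]) auto
  also have "\<dots> \<le> (\<integral>\<^sup>+w. ennreal (p w) * (\<integral>\<^sup>+y. ennreal (V y * gauss_density \<sigma> (F w) y) \<partial>lborel) \<partial>lborel)"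
  proof (intro nn_integral_mono)
    fix w
    \<comment> \<open>by disjointness at most one threshold is charged at each weight \<open>w\<close>\<close>
    have "(\<Sum>i\<in>I. k i * indicator (H i) w) \<le> (\<integral>\<^sup>+y. ennreal (V y * gauss_density \<sigma> (F w) y) \<partial>lborel)"
      using \<open>finite I\<close> H_disj
    proof (rule sum_indicator_disjoint_le)
      fix i assume "i \<in> I" "w \<in> H i"
      then show "k i \<le> (\<integral>\<^sup>+y. ennreal (V y * gauss_density \<sigma> (F w) y) \<partial>lborel)"
        unfolding k_def using c_nonneg V_ge
        by (intro nn_integral_gauss_density_ge[OF assms(1-3) V_nonneg]) auto
    qed
    moreover have "k i * ennreal (indicator (H i) w * p w) = ennreal (p w) * (k i * indicator (H i) w)" for i
      by (cases "w \<in> H i") (simp_all add: mult.commute)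
    ultimately show "(\<Sum>i\<in>I. k i * ennreal (indicator (H i) w * p w))
        \<le> ennreal (p w) * (\<integral>\<^sup>+y. ennreal (V y * gauss_density \<sigma> (F w) y) \<partial>lborel)"
      by (simp add: sum_distrib_left[symmetric] mult_left_mono)
  qed
  finally show ?thesis .
qed

lemma threshold_sum_le_integral_post_pred:
  fixes f :: "real^'w \<Rightarrow> real^'n \<Rightarrow> real^'c \<Rightarrow> real^'n" and H :: "'i \<Rightarrow> (real^'w) set"
  assumes f: "(\<lambda>(w, x, u). f w x u) \<in> borel_measurable borel"
    and p_meas: "p \<in> borel_measurable lborel"
    and p_nonneg: "\<And>w. 0 \<le> p w" and p_prob: "(\<integral>\<^sup>+w. ennreal (p w) \<partial>lborel) = 1"
    and "0 < \<sigma>" "0 < \<eta>" "\<eta> < 1"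
    and V_meas: "V \<in> borel_measurable borel"
    and V_nonneg: "\<And>y. 0 \<le> V y" and V_le_1: "\<And>y. V y \<le> 1"
    and "finite I" and "\<And>i. i \<in> I \<Longrightarrow> H i \<in> sets lborel" and "disjoint_family_on H I"
    and "\<And>i. i \<in> I \<Longrightarrow> 0 \<le> c i"
    and "\<And>i w y. i \<in> I \<Longrightarrow> w \<in> H i \<Longrightarrow>
      (\<forall>j. \<bar>y $ j - f w x u $ j\<bar> \<le> trunc_eps \<sigma> \<eta>) \<Longrightarrow> c i \<le> V y"
  shows "(\<Sum>i\<in>I. c i * (\<eta> ^ CARD('n) * (LINT w:H i|lborel. p w)))
    \<le> (LINT y|lborel. V y * post_pred f p \<sigma> x u y)"
proof -
  note V = V_meas V_nonneg V_le_1
  have "ennreal (\<Sum>i\<in>I. c i * (\<eta> ^ CARD('n) * (LINT w:H i|lborel. p w)))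
      \<le> (\<integral>\<^sup>+y. ennreal (V y * post_pred f p \<sigma> x u y) \<partial>lborel)"
    unfolding nn_integral_post_pred[OF f p_meas p_nonneg p_prob V_meas V_nonneg]
    by (rule threshold_sum_le_nn_integral_gauss_mixture[where F = "\<lambda>w. f w x u"])
       (use assms in auto)
  moreover have "(\<integral>\<^sup>+y. ennreal (V y * post_pred f p \<sigma> x u y) \<partial>lborel) < top"
    using nn_integral_post_pred_le_1[OF f p_meas p_nonneg p_prob \<open>0 < \<sigma>\<close> V, of x u]
    by (simp add: order_le_less_trans ennreal_one_less_top)
  ultimately show ?thesis
    unfolding integral_post_pred_eq_enn2real[OF f p_meas p_nonneg p_prob \<open>0 < \<sigma>\<close> V]
    by (rule le_enn2real_of_ennreal_le)
qed

lemma Vrec_measurable_bounded: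
  fixes f :: "real^'w \<Rightarrow> real^'n \<Rightarrow> real^'c \<Rightarrow> real^'n"
  assumes f: "(\<lambda>(w, x, u). f w x u) \<in> borel_measurable borel"
    and p_meas: "p \<in> borel_measurable lborel"
    and p_nonneg: "\<And>w. 0 \<le> p w" and p_prob: "(\<integral>\<^sup>+w. ennreal (p w) \<partial>lborel) = 1"
    and "0 < \<sigma>" and \<pi>_meas: "\<And>j. \<pi> j \<in> borel_measurable borel"
    and [measurable]: "G \<in> sets borel" "S \<in> sets borel" and "G \<inter> S = {}"
  shows "Vrec f p \<sigma> \<pi> G S N m \<in> borel_measurable borel
    \<and> (\<forall>x. 0 \<le> Vrec f p \<sigma> \<pi> G S N m x \<and> Vrec f p \<sigma> \<pi> G S N m x \<le> 1)"
proof (induction m)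
  case 0
  then show ?case by (auto simp: indicator_def)
next
  case (Suc m)
  let ?V = "Vrec f p \<sigma> \<pi> G S N m" and ?u = "\<pi> (N - Suc m)"
  define I where "I x = (LINT y|lborel. ?V y * post_pred f p \<sigma> x (?u x) y)" for x
  have V_meas [measurable]: "?V \<in> borel_measurable borel"
    and V_bounds: "\<And>y. 0 \<le> ?V y" "\<And>y. ?V y \<le> 1"
    using Suc.IH by auto
  have "(\<lambda>(x, y). post_pred f p \<sigma> x (?u x) y) \<in> borel_measurable (lborel \<Otimes>\<^sub>M lborel)"
    by (rule borel_measurable_post_pred[OF f p_meas \<pi>_meas])
  then have "(\<lambda>(x, y). ?V y * post_pred f p \<sigma> x (?u x) y) \<in> borel_measurable (lborel \<Otimes>\<^sub>M lborel)"
    by measurable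
  then have [measurable]: "I \<in> borel_measurable borel"
    unfolding I_def by (simp add: lborel.borel_measurable_lebesgue_integral split_beta' cong: measurable_cong_sets)
  have "0 \<le> I x \<and> I x \<le> 1" for x
    unfolding I_def integral_post_pred_eq_enn2real[OF f p_meas p_nonneg p_prob \<open>0 < \<sigma>\<close> V_meas V_bounds]
    using nn_integral_post_pred_le_1[OF f p_meas p_nonneg p_prob \<open>0 < \<sigma>\<close> V_meas V_bounds]
    by (auto intro: enn2real_leI)
  moreover have "Vrec f p \<sigma> \<pi> G S N (Suc m) = (\<lambda>x. indicator G x + indicator S x * I x)"
    by (simp add: I_def fun_eq_iff)
  moreover have "(\<lambda>x. indicator G x + indicator S x * I x) \<in> borel_measurable borel"
    by measurable
  ultimately show ?case
    using \<open>G \<inter> S = {}\<close> by (auto simp: indicator_def)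
qed

lemma zcell_eqI:
  assumes "disjoint Q" "q \<in> Q" "x \<in> q"
  shows "zcell Q x = q"
  unfolding zcell_def
proof (rule the_equality)
  show "q \<in> Q \<and> x \<in> q" using assms(2,3) ..
  show "q' = q" if "q' \<in> Q \<and> x \<in> q'" for q'
    using assms that by (auto simp: disjoint_def)
qed

lemma Ktilde_le:
  assumes "\<Union>Q = S \<union> G" "disjoint Q"
    and K_le: "\<And>q x. q \<in> Q \<Longrightarrow> x \<in> q \<Longrightarrow> K q \<le> V x" and "\<And>y. 0 \<le> V y"
  shows "Ktilde Q S G K y \<le> V y"
proof (cases "y \<in> S \<union> G")
  case True
  then obtain q where "q \<in> Q" "y \<in> q" using assms(1) by blast
  then show ?thesis
    using True K_le zcell_eqI[OF assms(2)] by (simp add: Ktilde_def)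
qed (simp add: Ktilde_def assms(4))

lemma Hset_le_Ktilde:
  assumes "w \<in> Hset f \<pi> Q S G \<epsilon> v K k q i" "x \<in> q"
    and "\<forall>j. \<bar>y $ j - f w x (\<pi> k x) $ j\<bar> \<le> \<epsilon>"
  shows "v (i - 1) \<le> Ktilde Q S G K y"
proof -
  have "\<forall>j. \<bar>(y - f w x (\<pi> k x)) $ j\<bar> \<le> \<epsilon>" using assms(3) by simp
  then have "v (i - 1) \<le> Ktilde Q S G K (f w x (\<pi> k x) + (y - f w x (\<pi> k x)))"
    using assms(1,2) unfolding Hset_def by blast
  then show ?thesis by simp
qed

lemma nonneg_if_mono_from_zero:
  fixes v :: "nat \<Rightarrow> real"
  assumes "v 0 = 0" "\<And>i. i < n \<Longrightarrow> v i \<le> v (Suc i)" "j \<le> n"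
  shows "0 \<le> v j"
  using assms(3)
proof (induction j)
  case (Suc j)
  then show ?case using assms(2)[of j] by simp
qed (simp add: assms(1))

lemma Krec_le_Vrec:
  fixes f :: "real^'w \<Rightarrow> real^'n \<Rightarrow> real^'c \<Rightarrow> real^'n"
  assumes f: "(\<lambda>(w, x, u). f w x u) \<in> borel_measurable borel"
    and p_meas: "p \<in> borel_measurable lborel"
    and p_nonneg: "\<And>w. 0 \<le> p w" and p_prob: "(\<integral>\<^sup>+w. ennreal (p w) \<partial>lborel) = 1"
    and "0 < \<sigma>" and \<pi>_meas: "\<And>j. \<pi> j \<in> borel_measurable borel"
    and GS: "G \<in> sets borel" "S \<in> sets borel" "G \<inter> S = {}"
    and Q: "\<Union>Q = S \<union> G" "disjoint Q" and Q_GS: "\<And>q. q \<in> Q \<Longrightarrow> q \<subseteq> G \<or> q \<subseteq> S"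
    and "0 < \<eta>" "\<eta> < 1"
    and "v 0 = 0" and "\<And>i. i < np \<Longrightarrow> v i \<le> v (Suc i)"
    and H_meas: "\<And>k' q i. k \<le> k' \<Longrightarrow> k' < N \<Longrightarrow> q \<in> Q \<Longrightarrow> i \<in> {1..np} \<Longrightarrow>
      Hset f \<pi> Q S G (trunc_eps \<sigma> \<eta>) v
        (Krec f p \<pi> Q S G (trunc_eps \<sigma> \<eta>) \<eta> v np N (N - Suc k')) k' q i \<in> sets lborel"
    and H_disj: "\<And>k' q. k \<le> k' \<Longrightarrow> k' < N \<Longrightarrow> q \<in> Q \<Longrightarrow>
      disjoint_family_on (\<lambda>i. Hset f \<pi> Q S G (trunc_eps \<sigma> \<eta>) v
        (Krec f p \<pi> Q S G (trunc_eps \<sigma> \<eta>) \<eta> v np N (N - Suc k')) k' q i) {1..np}"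
  shows "m \<le> N - k \<Longrightarrow> q \<in> Q \<Longrightarrow> x \<in> q
    \<Longrightarrow> Krec f p \<pi> Q S G (trunc_eps \<sigma> \<eta>) \<eta> v np N m q \<le> Vrec f p \<sigma> \<pi> G S N m x"
proof (induction m arbitrary: q x)
  case 0
  then show ?case by (auto simp: cell_ind_def indicator_def)
next
  case (Suc m)
  let ?K = "Krec f p \<pi> Q S G (trunc_eps \<sigma> \<eta>) \<eta> v np N m"
    and ?V = "Vrec f p \<sigma> \<pi> G S N m"
  define k' where "k' = N - Suc m"
  define H where "H = Hset f \<pi> Q S G (trunc_eps \<sigma> \<eta>) v ?K k' q"
  have k': "k \<le> k'" "k' < N" "N - Suc k' = m" using Suc.prems(1) by (auto simp: k'_def)
  show ?case
  proof (cases "q \<subseteq> G")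
    case True
    moreover from True have "x \<in> G" "x \<notin> S" "\<not> q \<subseteq> S"
      using Suc.prems GS(3) by auto
    ultimately show ?thesis by (simp add: cell_ind_def)
  next
    case False
    then have "q \<subseteq> S" "x \<in> S" "x \<notin> G" "\<not> q \<subseteq> G"
      using Q_GS Suc.prems GS(3) by auto
    have V: "?V \<in> borel_measurable borel" "\<And>y. 0 \<le> ?V y" "\<And>y. ?V y \<le> 1"
      using Vrec_measurable_bounded[OF f p_meas p_nonneg p_prob \<open>0 < \<sigma>\<close> \<pi>_meas GS] by auto
    have K_le_V: "Ktilde Q S G ?K y \<le> ?V y" for y
      using Suc.IH Suc.prems(1) by (intro Ktilde_le[OF Q _ V(2)]) auto
    have "(\<Sum>i=1..np. v (i - 1) * (\<eta> ^ CARD('n) * (LINT w:H i|lborel. p w)))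
        \<le> (LINT y|lborel. ?V y * post_pred f p \<sigma> x (\<pi> k' x) y)"
    proof (rule threshold_sum_le_integral_post_pred[OF f p_meas p_nonneg p_prob
          \<open>0 < \<sigma>\<close> \<open>0 < \<eta>\<close> \<open>\<eta> < 1\<close> V])
      show "H i \<in> sets lborel" if "i \<in> {1..np}" for i
        using H_meas[OF k'(1,2) Suc.prems(2) that] by (simp add: H_def k'(3))
      show "disjoint_family_on H {1..np}"
        using H_disj[OF k'(1,2) Suc.prems(2)] by (simp add: H_def k'(3))
      show "0 \<le> v (i - 1)" if "i \<in> {1..np}" for i
        using that by (intro nonneg_if_mono_from_zero[of v np]) (use assms in auto)
      show "v (i - 1) \<le> ?V y"
        if "w \<in> H i" "\<forall>j. \<bar>y $ j - f w x (\<pi> k' x) $ j\<bar> \<le> trunc_eps \<sigma> \<eta>" for i w y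
        using Hset_le_Ktilde[OF that(1)[unfolded H_def] Suc.prems(3) that(2)] K_le_V[of y]
        by simp
    qed simp
    then show ?thesis
      using \<open>q \<subseteq> S\<close> \<open>x \<in> S\<close> \<open>x \<notin> G\<close> \<open>\<not> q \<subseteq> G\<close>
      by (simp add: cell_ind_def H_def k'_def)
  qed
qed

theorem theorem1:
  fixes f :: "real^'w \<Rightarrow> real^'n \<Rightarrow> real^'c \<Rightarrow> real^'n"
    and p :: "real^'w \<Rightarrow> real"
    and \<sigma> \<eta> :: real
    and U :: "(real^'c) set"
    and \<pi> :: "nat \<Rightarrow> real^'n \<Rightarrow> real^'c"
    and G S :: "(real^'n) set"
    and N :: nat
    and Q :: "(real^'n) set set"
    and v :: "nat \<Rightarrow> real" and np :: nat
    and k :: nat and q :: "(real^'n) set"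
  assumes f_meas: "(\<lambda>(w, x, u). f w x u) \<in> borel_measurable borel"
    and p_meas: "p \<in> borel_measurable lborel"
    and p_nonneg: "\<forall>w. 0 \<le> p w"
    and p_int: "(\<integral>\<^sup>+ w. ennreal (p w) \<partial>lborel) = 1"
    and \<sigma>_pos: "\<sigma> > 0"
    and U_compact: "compact U"
    and \<pi>_meas: "\<forall>j. \<pi> j \<in> borel_measurable borel"
    and \<pi>_U: "\<forall>j x. \<pi> j x \<in> U"
    and G_meas: "G \<in> sets borel" and S_meas: "S \<in> sets borel"
    and GS_disj: "G \<inter> S = {}"
    and Q_finite: "finite Q"
    and Q_cover: "\<Union>Q = S \<union> G"
    and Q_disj: "\<forall>q1\<in>Q. \<forall>q2\<in>Q. q1 \<noteq> q2 \<longrightarrow> q1 \<inter> q2 = {}"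
    and Q_nonempty: "\<forall>q1\<in>Q. q1 \<noteq> {}"
    and Q_meas: "\<forall>q1\<in>Q. q1 \<in> sets borel"
    and Q_GS: "\<forall>q1\<in>Q. q1 \<subseteq> G \<or> q1 \<subseteq> S"
    and \<eta>_range: "0 < \<eta>" "\<eta> < 1"
    and v0: "v 0 = 0" and vnp: "v np = 1"
    and v_mono: "\<forall>i<np. v i \<le> v (Suc i)"
    and H_meas: "\<forall>k'<N. \<forall>q1\<in>Q. \<forall>i\<in>{1..np}.
        Hset f \<pi> Q S G (trunc_eps \<sigma> \<eta>) v
          (Kfun f p \<pi> Q S G (trunc_eps \<sigma> \<eta>) \<eta> v np N (Suc k')) k' q1 i \<in> sets lborel"
    and k_le: "k \<le> N"
    and q_in: "q \<in> Q"
    and H_disj: "\<forall>k'\<in>{k..<N}. \<forall>q1\<in>Q.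
        disjoint_family_on
          (\<lambda>i. Hset f \<pi> Q S G (trunc_eps \<sigma> \<eta>) v
                 (Kfun f p \<pi> Q S G (trunc_eps \<sigma> \<eta>) \<eta> v np N (Suc k')) k' q1 i) {1..np}"
  shows "(INF x\<in>q. Vfun f p \<sigma> \<pi> G S N k x) \<ge> Kfun f p \<pi> Q S G (trunc_eps \<sigma> \<eta>) \<eta> v np N k q"
proof -
  have Kfun: "Kfun f p \<pi> Q S G \<epsilon> \<eta> v np N k' = Krec f p \<pi> Q S G \<epsilon> \<eta> v np N (N - k')" for \<epsilon> k'
    by (simp add: fun_eq_iff Kfun_def)
  have "disjoint Q" using Q_disj by (simp add: disjoint_def)
  moreover have "Hset f \<pi> Q S G (trunc_eps \<sigma> \<eta>) v
      (Krec f p \<pi> Q S G (trunc_eps \<sigma> \<eta>) \<eta> v np N (N - Suc k')) k' q' i \<in> sets lborel"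
    if "k' < N" "q' \<in> Q" "i \<in> {1..np}" for k' q' i
    using H_meas that by (simp add: Kfun)
  moreover have "disjoint_family_on (\<lambda>i. Hset f \<pi> Q S G (trunc_eps \<sigma> \<eta>) v
      (Krec f p \<pi> Q S G (trunc_eps \<sigma> \<eta>) \<eta> v np N (N - Suc k')) k' q' i) {1..np}"
    if "k \<le> k'" "k' < N" "q' \<in> Q" for k' q'
    using H_disj that by (simp add: Kfun)
  ultimately have "Krec f p \<pi> Q S G (trunc_eps \<sigma> \<eta>) \<eta> v np N (N - k) q \<le> Vrec f p \<sigma> \<pi> G S N (N - k) x"
    if "x \<in> q" for x
    using Krec_le_Vrec[where f = f and p = p and \<sigma> = \<sigma> and \<pi> = \<pi> and G = G and S = S and Q = Q
          and \<eta> = \<eta> and v = v and np = np and N = N and k = k and m = "N - k" and q = q and x = x]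
      f_meas p_meas p_nonneg p_int \<sigma>_pos \<pi>_meas G_meas S_meas GS_disj Q_cover Q_GS \<eta>_range v0 v_mono
      q_in that
    by blast
  then show ?thesis
    using Q_nonempty q_in by (intro cINF_greatest) (auto simp: Kfun_def Vfun_def)
qed

end
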